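(* Let $\Gamma_1:[0,1]\to\mathbb{R}^{1\times n}$ be the solution of $\Gamma_1''(x)=\varepsilon_1^{-1}\Gamma_1(x)A$, $\Gamma_1(0)=\Gamma_0$, $\Gamma_1'(0)=0$. The first-order hyperbolic system on $\mathcal{T}$ \begin{align*} \sqrt{\varepsilon_1}\partial_xk_{11}+\sqrt{\varepsilon_1}\partial_yk_{11}&=\check k_{11}, & \sqrt{\varepsilon_1}\partial_xk_{12}+\sqrt{\varepsilon_2}\partial_yk_{12}&=\check k_{12},\\ \sqrt{\varepsilon_1}\partial_x\check k_{11}-\sqrt{\varepsilon_1}\partial_y\check k_{11}&=0, & \sqrt{\varepsilon_1}\partial_x\check k_{12}-\sqrt{\varepsilon_2}\partial_y\check k_{12}&=0, \end{align*} with boundary conditions \begin{align*} k_{11}(x,0)&=\frac{a\varepsilon_2}{\varepsilon_1(a\varepsilon_2+\sqrt{\varepsilon_1\varepsilon_2})}\int_0^x\big[\sqrt{\varepsilon_1}\check k_{11}(y,0)+\sqrt{\varepsilon_2}\check k_{12}(y,0)-\Gamma_1(y)B\big]dy,\\ k_{12}(x,0)&=\frac{1}{a\varepsilon_2+\sqrt{\varepsilon_1\varepsilon_2}}\int_0^x\big[\sqrt{\varepsilon_1}\check k_{11}(y,0)+\sqrt{\varepsilon_2}\check k_{12}(y,0)-\Gamma_1(y)B\big]dy,\\ k_{12}(x,x)&=0,\qquad \check k_{11}(x,x)=0,\qquad \check k_{12}(x,x)=0, \end{align*} admits a unique solution (in the sense of integration along characteristics) with $k_{11},k_{12},\check k_{11},\check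 k_{12}\in C(\mathcal{T})$.
   Context: Fix $\varepsilon>0$, $y_0\in(-1,0)$; $\varepsilon_1=\varepsilon/(1+y_0)^2$, $\varepsilon_2=\varepsilon/(1-y_0)^2$ (so $\varepsilon_1>\varepsilon_2>0$), $a=(1+y_0)/(1-y_0)\in(0,1)$. $A\in\mathbb{R}^{n\times n}$, $B\in\mathbb{R}^{n\times1}$, $\Gamma_0\in\mathbb{R}^{1\times n}$. $\mathcal{T}=\{(x,y):0\le y\le x\le1\}$. *)

theory Defs
  imports "HOL-Analysis.Analysis"
begin

definition eps1 :: "real \<Rightarrow> real \<Rightarrow> real" where
  "eps1 \<epsilon> y0 = \<epsilon> / (1 + y0)^2"

definition eps2 :: "real \<Rightarrow> real \<Rightarrow> real" where
  "eps2 \<epsilon> y0 = \<epsilon> / (1 - y0)^2"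

definition aa :: "real \<Rightarrow> real" where
  "aa y0 = (1 + y0) / (1 - y0)"

definition Tri :: "(real \<times> real) set" where
  "Tri = {(x, y). 0 \<le> y \<and> y \<le> x \<and> x \<le> 1}"

text \<open>k solves  l1 * k_x + l2 * k_y = f  on Tri in the sense of integration along
  characteristics: along every characteristic segment (x,y) + s(l1,l2), 0 <= s <= t,
  lying in Tri (Tri is convex, so it suffices that both endpoints lie in Tri),
  the increment of k equals the integral of f.\<close>
definition char_sol :: "real \<Rightarrow> real \<Rightarrow> (real \<times> real \<Rightarrow> real) \<Rightarrow> (real \<times> real \<Rightarrow> real) \<Rightarrow> bool" where
  "char_sol l1 l2 k f \<longleftrightarrow>
     (\<forall>x y t. (x, y) \<in> Tri \<and> 0 \<le> t \<and> (x + t * l1, y + t * l2) \<in> Tri \<longrightarrow>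
        k (x + t * l1, y + t * l2) - k (x, y) = integral {0..t} (\<lambda>s. f (x + s * l1, y + s * l2)))"

end

theory Submission
  imports Defs
begin

text \<open>The components c11, c12 solve homogeneous transport equations whose characteristics
  issue from the diagonal, where they vanish; hence they vanish on all of Tri. The boundary
  integrals then only involve the forcing term \<Gamma>1 B, so k11 and k12 are the transports of
  known data from the bottom edge along their characteristics. The characteristics of k12
  have slope a < 1, and the points above the one through the origin are reached from the
  diagonal instead, where k12 = 0. The same transport formula gives existence and
  uniqueness.\<close>

lemma nonneg_affine_between:
  fixes u v s t :: real
  assumes "0 \<le> u" "0 \<le> u + t * v" "0 \<le> s" "s \<le> t"
  shows "0 \<le> u + s * v"
proof (cases "0 \<le> v")
  case False
  then have "t * v \<le> s * v" using assms(4) by (intro mult_right_mono_neg) auto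
  then show ?thesis using assms(2) by linarith
qed (use assms in simp)

lemma Tri_segment:
  assumes "(x, y) \<in> Tri" "(x + t * l1, y + t * l2) \<in> Tri" "0 \<le> s" "s \<le> t"
  shows "(x + s * l1, y + s * l2) \<in> Tri"
proof -
  have "0 \<le> y" "0 \<le> y + t * l2"
    and "0 \<le> x - y" "0 \<le> (x - y) + t * (l1 - l2)"
    and "0 \<le> 1 - x" "0 \<le> (1 - x) + t * (- l1)"
    using assms(1,2) by (auto simp: Tri_def algebra_simps)
  then have "0 \<le> y + s * l2" "0 \<le> (x - y) + s * (l1 - l2)" "0 \<le> (1 - x) + s * (- l1)"
    using nonneg_affine_between assms(3,4) by blast+
  then show ?thesis by (auto simp: Tri_def algebra_simps)
qed

lemma char_sol_homogeneous_const:
  assumes "char_sol l1 l2 k f" "\<forall>p\<in>Tri. f p = 0"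
    and "(x, y) \<in> Tri" "0 \<le> t" "(x + t * l1, y + t * l2) \<in> Tri"
  shows "k (x + t * l1, y + t * l2) = k (x, y)"
proof -
  have "k (x + t * l1, y + t * l2) - k (x, y) = integral {0..t} (\<lambda>s. f (x + s * l1, y + s * l2))"
    using assms unfolding char_sol_def by blast
  also have "\<dots> = integral {0..t} (\<lambda>s. 0)"
    using assms(2,3,5) Tri_segment by (intro integral_cong) auto
  finally show ?thesis by simp
qed

lemma char_sol_trace_to_bottom:
  assumes "char_sol l1 l2 k f" "\<forall>p\<in>Tri. f p = 0" "0 \<le> l1" "0 < l2"
    and "(x, y) \<in> Tri" "0 \<le> x - y / l2 * l1"
  shows "k (x, y) = k (x - y / l2 * l1, 0)"
proof -
  have "0 \<le> y / l2 * l1"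
    using assms(3-5) by (simp add: Tri_def)
  then have foot: "(x - y / l2 * l1, 0) \<in> Tri"
    using assms(5,6) by (auto simp: Tri_def)
  have "(x - y / l2 * l1 + y / l2 * l1, 0 + y / l2 * l2) = (x, y)"
    using assms(4) by simp
  then show ?thesis
    using char_sol_homogeneous_const[OF assms(1,2) foot, of "y / l2"] assms(4,5)
    by (simp add: Tri_def)
qed

lemma char_sol_trace_to_diagonal:
  assumes "char_sol l1 l2 k f" "\<forall>p\<in>Tri. f p = 0" "0 \<le> l1" "l2 < l1"
    and "(x, y) \<in> Tri" "0 \<le> x - (x - y) / (l1 - l2) * l1"
  shows "k (x, y) = k (x - (x - y) / (l1 - l2) * l1, x - (x - y) / (l1 - l2) * l1)"
proof -
  define s where "s = (x - y) / (l1 - l2)"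
  define d where "d = x - s * l1"
  have s: "0 \<le> s" and "s * (l1 - l2) = x - y"
    using assms(4,5) by (auto simp: s_def Tri_def)
  then have ends: "d + s * l1 = x" "d + s * l2 = y"
    by (auto simp: d_def algebra_simps)
  have "d \<le> x"
    using assms(3) s by (simp add: d_def)
  then have "(d, d) \<in> Tri"
    using assms(5,6) by (auto simp: Tri_def d_def s_def)
  then show ?thesis
    using char_sol_homogeneous_const[OF assms(1,2), of d d s] s ends assms(5)
    by (simp add: d_def s_def)
qed

lemma char_sol_vanishes_from_diagonal:
  assumes "char_sol r (- q) c (\<lambda>_. 0)" "0 < r" "0 \<le> q"
    and "\<forall>x\<in>{0..1}. c (x, x) = 0"
  shows "\<forall>p\<in>Tri. c p = 0"
proof
  fix p assume "p \<in> Tri"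
  then obtain x y where p: "p = (x, y)" and xy: "(x, y) \<in> Tri" by (cases p) auto
  define d where "d = x - (x - y) / (r - - q) * r"
  have "(x - y) / (r + q) * r \<le> x - y"
    using xy assms(2,3) by (auto simp: Tri_def field_simps intro!: mult_left_mono)
  then have "y \<le> d" by (simp add: d_def)
  moreover have "d \<le> x"
    using xy assms(2,3) by (simp add: Tri_def d_def)
  ultimately have "c (x, y) = c (d, d)" and "d \<in> {0..1}"
    using char_sol_trace_to_diagonal[OF assms(1), of x y] xy assms(2,3)
    by (auto simp: d_def Tri_def)
  then show "c p = 0" using assms(4) p by simp
qed

text \<open>Bottom-edge data h carried along the characteristics of direction (l1, l2); points
  above the characteristic through the origin receive h 0.\<close>
definition bottom_transport :: "real \<Rightarrow> real \<Rightarrow> (real \<Rightarrow> real) \<Rightarrow> real \<times> real \<Rightarrow> real" where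
  "bottom_transport l1 l2 h p = (if p \<in> Tri then h (max 0 (fst p - snd p / l2 * l1)) else 0)"

lemma char_sol_bottom_transport:
  assumes "l2 \<noteq> 0"
  shows "char_sol l1 l2 (bottom_transport l1 l2 h) (\<lambda>_. 0)"
proof -
  have foot: "(x + t * l1) - (y + t * l2) / l2 * l1 = x - y / l2 * l1" for x y t
    using assms by (simp add: field_simps)
  show ?thesis
    unfolding char_sol_def bottom_transport_def fst_conv snd_conv foot by simp
qed

lemma continuous_on_bottom_transport:
  assumes "continuous_on {0..1} h" "0 \<le> l1" "0 < l2"
  shows "continuous_on Tri (bottom_transport l1 l2 h)"
proof -
  have "max 0 (x - y / l2 * l1) \<in> {0..1}" if "(x, y) \<in> Tri" for x y
  proof -
    have "0 \<le> y / l2 * l1" using that assms(2,3) by (simp add: Tri_def)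
    then show ?thesis using that by (auto simp: Tri_def)
  qed
  then have "continuous_on Tri (\<lambda>p. h (max 0 (fst p - snd p / l2 * l1)))"
    using assms(3) by (intro continuous_on_compose2[OF assms(1)] continuous_intros) auto
  then show ?thesis
    by (rule continuous_on_eq) (simp add: bottom_transport_def)
qed

lemma bottom_transport_eq_on_edges:
  assumes "x \<in> {0..1}" "0 < l2" "l2 \<le> l1"
  shows "bottom_transport l1 l2 h (x, 0) = h x"
    and "bottom_transport l1 l2 h (x, x) = h 0"
proof -
  have "x \<le> x / l2 * l1"
    using assms mult_right_mono[of l2 l1 x] by (auto simp: field_simps)
  then show "bottom_transport l1 l2 h (x, x) = h 0"
    using assms(1) by (simp add: bottom_transport_def Tri_def)
qed (use assms in \<open>simp add: bottom_transport_def Tri_def\<close>)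

lemma char_sol_eq_bottom_transport:
  assumes "char_sol l1 l2 k f" "\<forall>p\<in>Tri. f p = 0" "0 < l2" "l2 \<le> l1"
    and "\<forall>x\<in>{0..1}. k (x, 0) = h x" "h 0 = 0"
    and "l2 < l1 \<Longrightarrow> \<forall>x\<in>{0..1}. k (x, x) = 0"
    and "\<forall>p. p \<notin> Tri \<longrightarrow> k p = 0"
  shows "k = bottom_transport l1 l2 h"
proof
  fix p show "k p = bottom_transport l1 l2 h p"
  proof (cases "p \<in> Tri")
    case False
    then have "k p = 0" using assms(8) by blast
    then show ?thesis using False by (simp add: bottom_transport_def)
  next
    case True
    then obtain x y where p: "p = (x, y)" and xy: "(x, y) \<in> Tri" by (cases p) auto
    have l1: "0 \<le> l1" using assms(3,4) by linarith
    show ?thesis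
    proof (cases "0 \<le> x - y / l2 * l1")
      case True
      have "0 \<le> y / l2 * l1" using xy l1 assms(3) by (simp add: Tri_def)
      then have "k (x, y) = h (x - y / l2 * l1)"
        using char_sol_trace_to_bottom[OF assms(1,2) l1 assms(3) xy True] assms(5) xy True
        by (auto simp: Tri_def)
      then show ?thesis using True xy p by (simp add: bottom_transport_def)
    next
      case False
      define d where "d = x - (x - y) / (l1 - l2) * l1"
      have "l2 < l1"
        using False xy assms(3,4) by (cases "l2 = l1") (auto simp: Tri_def)
      moreover have "0 \<le> d"
        using False calculation assms(3) xy by (auto simp: d_def Tri_def field_simps)
      moreover have "d \<le> x"
        using calculation l1 xy by (simp add: d_def Tri_def)
      ultimately have "k (x, y) = 0"
        using char_sol_trace_to_diagonal[OF assms(1,2) l1, of x y] assms(7) xy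
        by (auto simp: d_def Tri_def)
      then show ?thesis using False xy p assms(6) by (simp add: bottom_transport_def)
    qed
  qed
qed

type_synonym kernel =
  "(real \<times> real \<Rightarrow> real) \<times> (real \<times> real \<Rightarrow> real) \<times> (real \<times> real \<Rightarrow> real) \<times> (real \<times> real \<Rightarrow> real)"

text \<open>The system of the theorem with r1 = sqrt \<epsilon>1, r2 = sqrt \<epsilon>2, g = \<Gamma>1 B and general
  coefficients C1, C2 in the boundary conditions; c11, c12 are the kernels written with a
  check accent.\<close>
definition kernel_system :: "real \<Rightarrow> real \<Rightarrow> real \<Rightarrow> real \<Rightarrow> (real \<Rightarrow> real) \<Rightarrow> kernel \<Rightarrow> bool" where
  "kernel_system r1 r2 C1 C2 g K \<longleftrightarrow> (case K of (k11, k12, c11, c12) \<Rightarrow>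
     let F = (\<lambda>x. integral {0..x} (\<lambda>y. r1 * c11 (y, 0) + r2 * c12 (y, 0) - g y))
     in (\<forall>p. p \<notin> Tri \<longrightarrow> k11 p = 0 \<and> k12 p = 0 \<and> c11 p = 0 \<and> c12 p = 0)
      \<and> continuous_on Tri k11 \<and> continuous_on Tri k12
      \<and> continuous_on Tri c11 \<and> continuous_on Tri c12
      \<and> char_sol r1 r1 k11 c11 \<and> char_sol r1 r2 k12 c12
      \<and> char_sol r1 (- r1) c11 (\<lambda>_. 0) \<and> char_sol r1 (- r2) c12 (\<lambda>_. 0)
      \<and> (\<forall>x\<in>{0..1}. k11 (x, 0) = C1 * F x \<and> k12 (x, 0) = C2 * F x
           \<and> k12 (x, x) = 0 \<and> c11 (x, x) = 0 \<and> c12 (x, x) = 0))"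

definition kernel_solution :: "real \<Rightarrow> real \<Rightarrow> real \<Rightarrow> real \<Rightarrow> (real \<Rightarrow> real) \<Rightarrow> kernel" where
  "kernel_solution r1 r2 C1 C2 g =
     (let G = (\<lambda>x. integral {0..x} (\<lambda>y. - g y))
      in (bottom_transport r1 r1 (\<lambda>x. C1 * G x), bottom_transport r1 r2 (\<lambda>x. C2 * G x),
          \<lambda>_. 0, \<lambda>_. 0))"

lemma forcing_integral_eq:
  fixes c11 c12 :: "real \<times> real \<Rightarrow> real"
  assumes "\<forall>p\<in>Tri. c11 p = 0" "\<forall>p\<in>Tri. c12 p = 0" "x \<in> {0..1}"
  shows "integral {0..x} (\<lambda>y. r1 * c11 (y, 0) + r2 * c12 (y, 0) - g y)
       = integral {0..x} (\<lambda>y. - g y)"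
  using assms by (intro integral_cong) (auto simp: Tri_def)

lemma kernel_system_kernel_solution:
  assumes "0 < r2" "r2 \<le> r1" "continuous_on {0..1} g"
  shows "kernel_system r1 r2 C1 C2 g (kernel_solution r1 r2 C1 C2 g)"
proof -
  define G where "G = (\<lambda>x. integral {0..x} (\<lambda>y. - g y))"
  have r1: "0 < r1" using assms(1,2) by linarith
  have "continuous_on {0..1} G"
    unfolding G_def using assms(3)
    by (intro indefinite_integral_continuous_1 integrable_continuous_interval continuous_intros)
  then have cont: "continuous_on {0..1} (\<lambda>x. C * G x)" for C
    by (intro continuous_intros)
  have "G 0 = 0" by (simp add: G_def)
  moreover have "integral {0..x} (\<lambda>y. r1 * 0 + r2 * 0 - g y) = G x" if "x \<in> {0..1}" for x
    using forcing_integral_eq[of "\<lambda>_. 0" "\<lambda>_. 0" x r1 r2 g] that by (simp add: G_def)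
  ultimately have "\<forall>x\<in>{0..1}.
      bottom_transport r1 r1 (\<lambda>x. C1 * G x) (x, 0) = C1 * integral {0..x} (\<lambda>y. r1 * 0 + r2 * 0 - g y)
    \<and> bottom_transport r1 r2 (\<lambda>x. C2 * G x) (x, 0) = C2 * integral {0..x} (\<lambda>y. r1 * 0 + r2 * 0 - g y)
    \<and> bottom_transport r1 r2 (\<lambda>x. C2 * G x) (x, x) = 0"
    using bottom_transport_eq_on_edges r1 assms(1,2) by simp
  moreover have "\<forall>p. p \<notin> Tri \<longrightarrow> bottom_transport r1 r1 (\<lambda>x. C1 * G x) p = 0
      \<and> bottom_transport r1 r2 (\<lambda>x. C2 * G x) p = 0"
    by (simp add: bottom_transport_def)
  moreover have "char_sol r1 r1 (bottom_transport r1 r1 (\<lambda>x. C1 * G x)) (\<lambda>_. 0)"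
    "char_sol r1 r2 (bottom_transport r1 r2 (\<lambda>x. C2 * G x)) (\<lambda>_. 0)"
    using r1 assms(1) by (simp_all add: char_sol_bottom_transport)
  moreover have "char_sol r1 (- r1) (\<lambda>_. 0) (\<lambda>_. 0)" "char_sol r1 (- r2) (\<lambda>_. 0) (\<lambda>_. 0)"
    by (simp_all add: char_sol_def)
  moreover have "continuous_on Tri (bottom_transport r1 r1 (\<lambda>x. C1 * G x))"
    "continuous_on Tri (bottom_transport r1 r2 (\<lambda>x. C2 * G x))"
    using continuous_on_bottom_transport[OF cont] r1 assms(1) by simp_all
  ultimately show ?thesis
    unfolding kernel_system_def kernel_solution_def Let_def G_def[symmetric] prod.case
    by (intro conjI continuous_on_const) blast+
qed

lemma kernel_system_unique:
  assumes "0 < r2" "r2 \<le> r1" "kernel_system r1 r2 C1 C2 g K"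
  shows "K = kernel_solution r1 r2 C1 C2 g"
proof -
  obtain k11 k12 c11 c12 where K: "K = (k11, k12, c11, c12)" by (cases K)
  have r1: "0 < r1" using assms(1,2) by linarith
  note sys = assms(3)[unfolded K kernel_system_def prod.case Let_def]
  have out: "\<forall>p. p \<notin> Tri \<longrightarrow> k11 p = 0 \<and> k12 p = 0 \<and> c11 p = 0 \<and> c12 p = 0"
    and cs: "char_sol r1 r1 k11 c11" "char_sol r1 r2 k12 c12"
      "char_sol r1 (- r1) c11 (\<lambda>_. 0)" "char_sol r1 (- r2) c12 (\<lambda>_. 0)"
    and bd: "\<forall>x\<in>{0..1}.
      k11 (x, 0) = C1 * integral {0..x} (\<lambda>y. r1 * c11 (y, 0) + r2 * c12 (y, 0) - g y)
    \<and> k12 (x, 0) = C2 * integral {0..x} (\<lambda>y. r1 * c11 (y, 0) + r2 * c12 (y, 0) - g y)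
    \<and> k12 (x, x) = 0 \<and> c11 (x, x) = 0 \<and> c12 (x, x) = 0"
    using sys by blast+
  have c11: "\<forall>p\<in>Tri. c11 p = 0"
    using char_sol_vanishes_from_diagonal[OF cs(3) r1] r1 bd by auto
  have c12: "\<forall>p\<in>Tri. c12 p = 0"
    using char_sol_vanishes_from_diagonal[OF cs(4) r1] assms(1) bd by auto
  define G where "G = (\<lambda>x. integral {0..x} (\<lambda>y. - g y))"
  have bottom: "\<forall>x\<in>{0..1}. k11 (x, 0) = C1 * G x \<and> k12 (x, 0) = C2 * G x"
    using bd forcing_integral_eq[OF c11 c12] by (simp add: G_def)
  have "G 0 = 0" by (simp add: G_def)
  then have "k11 = bottom_transport r1 r1 (\<lambda>x. C1 * G x)"
    and "k12 = bottom_transport r1 r2 (\<lambda>x. C2 * G x)"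
    using char_sol_eq_bottom_transport[OF cs(1) c11 r1 order_refl]
      char_sol_eq_bottom_transport[OF cs(2) c12 assms(1,2)] bottom bd out
    by auto
  moreover have "c11 = (\<lambda>_. 0)" "c12 = (\<lambda>_. 0)"
    using c11 c12 out by (metis ext)+
  ultimately show ?thesis
    by (simp add: K kernel_solution_def G_def)
qed

lemma kernel_system_ex1:
  assumes "0 < r2" "r2 \<le> r1" "continuous_on {0..1} g"
  shows "\<exists>!K. kernel_system r1 r2 C1 C2 g K"
  using kernel_system_kernel_solution[OF assms] kernel_system_unique[OF assms(1,2)] by blast

theorem lemma2:
  fixes \<epsilon> y0 :: real
    and A :: "real^'n^'n" and B :: "real^'n" and \<Gamma>0 :: "real^'n"
    and \<Gamma>1 \<Gamma>1' :: "real \<Rightarrow> real^'n"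
  assumes "\<epsilon> > 0" and "-1 < y0" and "y0 < 0"
    and "\<forall>x\<in>{0..1}. (\<Gamma>1 has_vector_derivative \<Gamma>1' x) (at x within {0..1})"
    and "\<forall>x\<in>{0..1}. (\<Gamma>1' has_vector_derivative ((1 / eps1 \<epsilon> y0) *\<^sub>R (\<Gamma>1 x v* A)))
                        (at x within {0..1})"
    and "\<Gamma>1 0 = \<Gamma>0" and "\<Gamma>1' 0 = 0"
  shows "\<exists>!K. let (k11, k12, c11, c12) = K;
              e1 = eps1 \<epsilon> y0; e2 = eps2 \<epsilon> y0; a = aa y0;
              F = (\<lambda>x. integral {0..x}
                     (\<lambda>y. sqrt e1 * c11 (y, 0) + sqrt e2 * c12 (y, 0) - \<Gamma>1 y \<bullet> B))
           in (\<forall>p. p \<notin> Tri \<longrightarrow> k11 p = 0 \<and> k12 p = 0 \<and> c11 p = 0 \<and> c12 p = 0)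
            \<and> continuous_on Tri k11 \<and> continuous_on Tri k12
            \<and> continuous_on Tri c11 \<and> continuous_on Tri c12
            \<and> char_sol (sqrt e1) (sqrt e1) k11 c11
            \<and> char_sol (sqrt e1) (sqrt e2) k12 c12
            \<and> char_sol (sqrt e1) (- sqrt e1) c11 (\<lambda>_. 0)
            \<and> char_sol (sqrt e1) (- sqrt e2) c12 (\<lambda>_. 0)
            \<and> (\<forall>x\<in>{0..1}.
                 k11 (x, 0) = a * e2 / (e1 * (a * e2 + sqrt (e1 * e2))) * F x
               \<and> k12 (x, 0) = 1 / (a * e2 + sqrt (e1 * e2)) * F x
               \<and> k12 (x, x) = 0 \<and> c11 (x, x) = 0 \<and> c12 (x, x) = 0)"
proof -
  have "0 < 1 + y0" "0 < 1 - y0" using assms(2,3) by linarith+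
  then have "sqrt (eps1 \<epsilon> y0) = sqrt \<epsilon> / (1 + y0)" "sqrt (eps2 \<epsilon> y0) = sqrt \<epsilon> / (1 - y0)"
    by (simp_all add: eps1_def eps2_def real_sqrt_divide)
  then have speeds: "0 < sqrt (eps2 \<epsilon> y0)" "sqrt (eps2 \<epsilon> y0) \<le> sqrt (eps1 \<epsilon> y0)"
    using assms(1,3) \<open>0 < 1 + y0\<close> by (simp_all add: frac_le)
  have "continuous_on {0..1} \<Gamma>1"
    by (rule continuous_on_vector_derivative) (use assms(4) in auto)
  then have "continuous_on {0..1} (\<lambda>y. \<Gamma>1 y \<bullet> B)"
    by (intro continuous_intros)
  from kernel_system_ex1[OF speeds this]
  show ?thesis
    unfolding kernel_system_def Let_def .
qed

end
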